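(* Let $p$ be a prime and $(r,e,d)\in\mathscr{D}(p)$. Then $\det M_d(f(x)^e)$ is divisible by $\delta(x_1,\ldots,x_r)^{2e-(p-1)}$ in $\mathbb{F}_p[x_1,\ldots,x_r]$.
   Context: $\mathscr{D}(p)$ is the set of integer triples $(r,e,d)$ with $r\ge2$, $\frac{p-1}{2}<e\le p-1$, $1\le d\le p$, and $d(p-1)\le re\le(d+1)(p-1)$. Let $x_1,\ldots,x_r$ be independent indeterminates over $\mathbb{F}_p$, $f(x)=(x-x_1)\cdots(x-x_r)$, write $f(x)^e=\sum_{i\ge0}c_ix^i$ ($c_i=0$ for $i<0$), and let $M_d(f(x)^e)$ be the $d\times d$ matrix with $(i,j)$ entry $c_{ip+j-d-1}$. Put $\delta(x_1,\ldots,x_r)=\prod_{1\le i<j\le r}(x_i-x_j)$. *)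

theory Defs
  imports "HOL-Library.Poly_Mapping" "HOL-Computational_Algebra.Polynomial"
    "Berlekamp_Zassenhaus.Finite_Field" "Jordan_Normal_Form.Determinant"
begin

text \<open>Multivariate polynomials over a ring 'a in the indeterminates indexed by nat:
  finitely supported maps from monomials (exponent vectors) to coefficients.\<close>
type_synonym 'a mpoly = "(nat \<Rightarrow>\<^sub>0 nat) \<Rightarrow>\<^sub>0 'a"

definition mvar :: "nat \<Rightarrow> 'a::comm_ring_1 mpoly" where
  "mvar i = Poly_Mapping.single (Poly_Mapping.single i 1) 1"

definition fpoly :: "nat \<Rightarrow> 'a::comm_ring_1 mpoly poly" where
  "fpoly r = (\<Prod>i\<in>{1..r}. [:- mvar i, 1:])"

definition icoeff :: "'b::zero poly \<Rightarrow> int \<Rightarrow> 'b" where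
  "icoeff g k = (if k < 0 then 0 else coeff g (nat k))"

text \<open>M_d(g): d x d matrix whose (i,j) entry (1-based) is c_{ip+j-d-1}.
  Here the matrix is 0-based, so entry (i,j) is c_{(i+1)p+(j+1)-d-1}.\<close>
definition Mmat :: "nat \<Rightarrow> nat \<Rightarrow> 'b::zero poly \<Rightarrow> 'b mat" where
  "Mmat p d g = mat d d (\<lambda>(i,j). icoeff g (int (i+1) * int p + int (j+1) - int d - 1))"

definition delta :: "nat \<Rightarrow> 'a::comm_ring_1 mpoly" where
  "delta r = (\<Prod>(i,j)\<in>{(i,j). 1 \<le> i \<and> i < j \<and> j \<le> r}. mvar i - mvar j)"

definition DD :: "nat \<Rightarrow> (nat \<times> nat \<times> nat) set" where
  "DD p = {(r,e,d). r \<ge> 2 \<and> int p - 1 < 2 * int e \<and> e \<le> p - 1 \<and> 1 \<le> d \<and> d \<le> p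
             \<and> d * (p - 1) \<le> r * e \<and> r * e \<le> (d + 1) * (p - 1)}"

end

theory Submission
  imports Defs
begin

text \<open>
  Fix i < j and put s = x_j, t = x_i - x_j. In characteristic p the coefficient of x^(p-1)
  in (x + s)^n is s^(n-p+1) if n = -1 (mod p) and 0 otherwise. Hence adding s^(pk) times
  row k to row 0 of M_d(f^e) (rows and columns counted from 0), which does not change the
  determinant, turns the entry in column b of row 0 into the x^(p-1)-coefficient of
  x^(d-1-b) f(x + s)^e. As f(x + s) = x (x - t) R, these are x^(p-1)-coefficients of
  x^e (x - t)^e Q, all divisible by t^(2e-(p-1)). Finally the forms x_i - x_j are pairwise
  non-associate prime elements, since x_c - x_d divides P exactly when P vanishes under
  x_c := x_d; so the powers of all of them divide the determinant together.
\<close>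

section \<open>Shifting the variable in characteristic p\<close>

lemma linear_power_prime_char:
  fixes s :: "'a::comm_ring_1"
  assumes p: "prime p" and char: "of_nat p = (0::'a)"
  shows "[:s, 1:] ^ p = monom 1 p + [:s ^ p:]"
proof (rule poly_eqI)
  fix k
  consider "k = 0" | "0 < k" "k < p" | "k = p" | "p < k" by linarith
  then show "coeff ([:s, 1:] ^ p) k = coeff (monom 1 p + [:s ^ p:]) k"
  proof cases
    case 2
    then have "p dvd (p choose k)" using p by (intro dvd_choose_prime) auto
    then have "(of_nat (p choose k) :: 'a) = 0" using char by (metis dvdE mult_zero_left of_nat_mult)
    then show ?thesis using 2 by (cases k) (simp_all add: coeff_linear_poly_power)
  qed (use p prime_gt_0_nat in \<open>auto simp: coeff_linear_poly_power coeff_eq_0 degree_linear_power\<close>)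
qed

lemma coeff_linear_power_pred_prime:
  fixes s :: "'a::comm_ring_1"
  assumes p: "prime p" and char: "of_nat p = (0::'a)"
  shows "coeff ([:s, 1:] ^ n) (p - 1) = (if n mod p = p - 1 then s ^ (n - (p - 1)) else 0)"
proof (induction n rule: less_induct)
  case (less n)
  have "0 < p" using p prime_gt_0_nat by blast
  show ?case
  proof (cases "n < p")
    case True
    then show ?thesis
      by (cases "n = p - 1") (auto simp: coeff_linear_poly_power coeff_eq_0 degree_linear_power)
  next
    case False
    then have n: "n = (n - p) + p" by simp
    have "[:s, 1:] ^ n = monom 1 p * [:s, 1:] ^ (n - p) + smult (s ^ p) ([:s, 1:] ^ (n - p))"
      by (subst n) (simp add: power_add linear_power_prime_char[OF p char] algebra_simps)
    then have "coeff ([:s, 1:] ^ n) (p - 1) = s ^ p * coeff ([:s, 1:] ^ (n - p)) (p - 1)"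
      using \<open>0 < p\<close> by (simp add: coeff_monom_mult)
    also have "\<dots> = (if n mod p = p - 1 then s ^ (n - (p - 1)) else 0)"
    proof -
      have "(n - p) mod p = n mod p" using False by (simp add: le_mod_geq)
      moreover have "p + (n - p - (p - 1)) = n - (p - 1)" if "n mod p = p - 1"
        using that False mod_less_eq_dividend[of "n - p" p] \<open>(n - p) mod p = n mod p\<close> by linarith
      ultimately show ?thesis using less[of "n - p"] False \<open>0 < p\<close> by (auto simp flip: power_add)
    qed
    finally show ?thesis .
  qed
qed

lemma pcompose_monom: "monom c n \<circ>\<^sub>p q = smult c (q ^ n)"
  by (induction n) (auto simp: monom_Suc monom_0)

lemma coeff_pcompose_eq_sum:
  fixes w q :: "'a::comm_ring_1 poly"
  assumes "degree w < M"
  shows "coeff (w \<circ>\<^sub>p q) i = (\<Sum>n<M. coeff w n * coeff (q ^ n) i)"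
proof -
  have "{..<M} = {..M - 1}" using assms by auto
  then have "(\<Sum>n<M. monom (coeff w n) n) = w"
    using poly_as_sum_of_monoms'[of w "M - 1"] assms by simp
  then have "w \<circ>\<^sub>p q = (\<Sum>n<M. monom (coeff w n) n) \<circ>\<^sub>p q" by simp
  also have "\<dots> = (\<Sum>n<M. smult (coeff w n) (q ^ n))"
    by (simp only: pcompose_hom.hom_sum pcompose_monom)
  finally show ?thesis by (simp add: coeff_sum)
qed

lemma coeff_pcompose_linear_pred_prime:
  fixes w :: "'a::comm_ring_1 poly"
  assumes p: "prime p" and char: "of_nat p = (0::'a)" and deg: "degree w < N * p + (p - 1)"
  shows "coeff (w \<circ>\<^sub>p [:s, 1:]) (p - 1) = (\<Sum>k<N. s ^ (p * k) * coeff w (k * p + (p - 1)))"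
proof -
  have "0 < p" using p prime_gt_0_nat by blast
  define F where "F n = coeff w n * coeff ([:s, 1:] ^ n) (p - 1)" for n
  have F_eq: "F (k * p + i) = (if i = p - 1 then s ^ (p * k) * coeff w (k * p + (p - 1)) else 0)"
    if "i < p" for k i
  proof -
    have "F (k * p + i) = coeff w (k * p + i) * (if i = p - 1 then s ^ (k * p + i - (p - 1)) else 0)"
      unfolding F_def coeff_linear_power_pred_prime[OF p char] using that by simp
    then show ?thesis by (simp add: mult.commute)
  qed
  have "coeff (w \<circ>\<^sub>p [:s, 1:]) (p - 1) = (\<Sum>n<Suc N * p. F n)"
    unfolding F_def using deg by (intro coeff_pcompose_eq_sum) simp
  also have "\<dots> = (\<Sum>k<Suc N. \<Sum>i<p. F (k * p + i))"
  proof -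
    have "sum F {k * p..<k * p + p} = (\<Sum>i<p. F (k * p + i))" for k
      using sum.shift_bounds_nat_ivl[of F 0 "k * p" p] by (simp add: atLeast0LessThan add.commute)
    then show ?thesis using sum.nat_group[of F p "Suc N"] by (simp only:)
  qed
  also have "\<dots> = (\<Sum>k<Suc N. s ^ (p * k) * coeff w (k * p + (p - 1)))"
  proof (rule sum.cong[OF refl])
    fix k
    have "(\<Sum>i<p. F (k * p + i))
        = (\<Sum>i<p. if i = p - 1 then s ^ (p * k) * coeff w (k * p + (p - 1)) else 0)"
      by (rule sum.cong) (simp_all add: F_eq)
    also have "\<dots> = s ^ (p * k) * coeff w (k * p + (p - 1))"
      using \<open>0 < p\<close> by simp
    finally show "(\<Sum>i<p. F (k * p + i)) = s ^ (p * k) * coeff w (k * p + (p - 1))" .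
  qed
  also have "\<dots> = (\<Sum>k<N. s ^ (p * k) * coeff w (k * p + (p - 1)))"
    using deg by (simp add: coeff_eq_0)
  finally show ?thesis .
qed

section \<open>Divisibility of the determinant by one linear form\<close>

lemma power_dvd_coeff_linear_power_mult:
  fixes t :: "'a::comm_ring_1"
  shows "t ^ (e - n) dvd coeff ([:- t, 1:] ^ e * Q) n"
proof -
  have "t ^ (e - n) dvd coeff ([:- t, 1:] ^ e) i" if "i \<le> n" for i
  proof (cases "i \<le> e")
    case True
    have "t ^ (e - n) dvd t ^ (e - i)" using that by (intro le_imp_power_dvd) simp
    then have "t ^ (e - n) dvd (- t) ^ (e - i)" unfolding power_minus[of t] by (rule dvd_mult)
    then show ?thesis using True by (simp add: coeff_linear_poly_power)
  next
    case False
    then show ?thesis by (simp add: coeff_eq_0 degree_linear_power)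
  qed
  then show ?thesis by (auto simp: coeff_mult intro!: dvd_sum dvd_mult2)
qed

lemma power_dvd_coeff_monom_linear_power_mult:
  fixes t :: "'a::comm_ring_1"
  shows "t ^ (2 * e - n) dvd coeff (monom 1 e * ([:- t, 1:] ^ e * Q)) n"
proof (cases "e \<le> n")
  case True
  then have "2 * e - n = e - (n - e)" by simp
  then show ?thesis using True power_dvd_coeff_linear_power_mult[of t e "n - e" Q]
    by (simp add: coeff_monom_mult)
qed (simp add: coeff_monom_mult)

lemma Mmat_index:
  fixes g :: "'a::comm_semiring_1 poly"
  assumes "0 < p" "i < d" "j < d"
  shows "Mmat p d g $$ (i, j) = coeff (monom 1 (d - 1 - j) * g) (i * p + (p - 1))"
proof -
  have "Mmat p d g $$ (i, j) = icoeff g (int (i * p + p + j) - int d)"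
    using assms by (simp add: Mmat_def algebra_simps)
  also have "\<dots> = coeff (monom 1 (d - 1 - j) * g) (i * p + (p - 1))"
  proof (cases "i * p + p + j < d")
    case True
    then have "\<not> d - 1 - j \<le> i * p + (p - 1)" using assms(1) by linarith
    moreover have "int (i * p + p + j) - int d < 0" using True by linarith
    then have "icoeff g (int (i * p + p + j) - int d) = 0" unfolding icoeff_def by (rule if_P)
    ultimately show ?thesis by (simp add: coeff_monom_mult)
  next
    case False
    then have "d - 1 - j \<le> i * p + (p - 1)" "i * p + (p - 1) - (d - 1 - j) = i * p + p + j - d"
      using assms by linarith+
    moreover have "int (i * p + p + j) - int d = int (i * p + p + j - d)" using False by simp
    ultimately show ?thesis unfolding icoeff_def by (simp add: coeff_monom_mult)
  qed
  finally show ?thesis .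
qed

lemma dvd_det_if_dvd_row_combination:
  fixes A :: "'a::comm_ring_1 mat"
  assumes A: "A \<in> carrier_mat n n" and n: "0 < n" and v: "v 0 = 1"
    and dvd: "\<And>j. j < n \<Longrightarrow> a dvd (\<Sum>i<n. v i * A $$ (i, j))"
  shows "a dvd det A"
proof -
  define U where "U = mat n n (\<lambda>(i, j). if i = 0 then v j else if i = j then 1 else 0)"
  have U: "U \<in> carrier_mat n n" by (simp add: U_def)
  have "upper_triangular U" by (auto simp: upper_triangular_def U_def)
  then have "det U = prod_list (diag_mat U)" using U by (rule det_upper_triangular)
  also have "\<dots> = 1" unfolding prod_list_diag_prod by (intro prod.neutral) (auto simp: U_def v)
  finally have "det A = det (U * A)" using det_mult[OF U A] by simp
  also have "\<dots> = (\<Sum>j<n. (U * A) $$ (0, j) * cofactor (U * A) 0 j)"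
    using U A n by (intro laplace_expansion_row) auto
  also have "a dvd \<dots>"
  proof (intro dvd_sum dvd_mult2)
    fix j assume "j \<in> {..<n}"
    then have "(U * A) $$ (0, j) = (\<Sum>i<n. v i * A $$ (i, j))"
      using U A n by (simp add: scalar_prod_def U_def atLeast0LessThan)
    then show "a dvd (U * A) $$ (0, j)" using dvd \<open>j \<in> {..<n}\<close> by simp
  qed
  finally show ?thesis .
qed

lemma power_dvd_det_Mmat:
  fixes g :: "'a::comm_ring_1 poly"
  assumes p: "prime p" and char: "of_nat p = (0::'a)" and d: "0 < d"
    and deg: "degree g \<le> (d + 1) * (p - 1)"
    and shift: "g \<circ>\<^sub>p [:s, 1:] = monom 1 e * ([:- t, 1:] ^ e * Q)"
  shows "t ^ (2 * e - (p - 1)) dvd det (Mmat p d g)"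
proof (rule dvd_det_if_dvd_row_combination[where v = "\<lambda>k. s ^ (p * k)"])
  show "Mmat p d g \<in> carrier_mat d d" by (simp add: Mmat_def)
  have "0 < p" using p prime_gt_0_nat by blast
  fix j assume j: "j < d"
  define w where "w = monom 1 (d - 1 - j) * g"
  have "degree w \<le> d - 1 + (d + 1) * (p - 1)"
    using degree_mult_le[of "monom 1 (d - 1 - j)" g] deg by (simp add: w_def degree_monom_eq)
  also have "\<dots> < d * p + (p - 1)" using d \<open>0 < p\<close> by (cases p) (simp_all add: algebra_simps)
  finally have deg_w: "degree w < d * p + (p - 1)" .
  have "(\<Sum>k<d. s ^ (p * k) * Mmat p d g $$ (k, j)) = (\<Sum>k<d. s ^ (p * k) * coeff w (k * p + (p - 1)))"
    using \<open>0 < p\<close> j by (simp add: Mmat_index w_def)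
  also have "\<dots> = coeff (w \<circ>\<^sub>p [:s, 1:]) (p - 1)"
    by (rule coeff_pcompose_linear_pred_prime[OF p char deg_w, symmetric])
  also have "w \<circ>\<^sub>p [:s, 1:] = monom 1 e * ([:- t, 1:] ^ e * ([:s, 1:] ^ (d - 1 - j) * Q))"
    by (simp add: w_def pcompose_hom.hom_mult pcompose_monom shift mult_ac)
  finally show "t ^ (2 * e - (p - 1)) dvd (\<Sum>k<d. s ^ (p * k) * Mmat p d g $$ (k, j))"
    by (simp add: power_dvd_coeff_monom_linear_power_mult)
qed (use d in auto)

section \<open>Products of powers of prime elements\<close>

lemma prime_elem_dvd_prodD:
  assumes "prime_elem p" "finite A" "p dvd prod f A"
  shows "\<exists>x\<in>A. p dvd f x"
  using assms(2,3)
proof (induction A rule: finite_induct)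
  case empty
  then show ?case using prime_elem_not_unit[OF assms(1)] by simp
next
  case (insert x A)
  then have "p dvd f x * prod f A" by simp
  then have "p dvd f x \<or> p dvd prod f A" using assms(1) by (simp only: prime_elem_dvd_mult_iff)
  then show ?case using insert.IH by blast
qed

lemma prime_elem_power_dvd_mult_cancel:
  fixes p :: "'a::idom"
  assumes p: "prime_elem p" and "\<not> p dvd a"
  shows "p ^ n dvd a * b \<Longrightarrow> p ^ n dvd b"
proof (induction n arbitrary: b)
  case (Suc n)
  have "p dvd a * b" by (rule dvd_trans[OF _ Suc.prems]) simp
  then have "p dvd b" using p \<open>\<not> p dvd a\<close> by (simp add: prime_elem_dvd_mult_iff)
  then obtain b' where b: "b = p * b'" by (rule dvdE)
  have "p * p ^ n dvd p * (a * b')" using Suc.prems by (simp add: b mult.left_commute)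
  then have "p ^ n dvd a * b'" using p by simp
  then have "p ^ n dvd b'" by (rule Suc.IH)
  then show ?case by (simp add: b)
qed simp

lemma prod_prime_elem_powers_dvd:
  fixes f :: "'b \<Rightarrow> 'a::idom"
  assumes "finite S"
    and "\<And>x. x \<in> S \<Longrightarrow> prime_elem (f x)"
    and "\<And>x y. x \<in> S \<Longrightarrow> y \<in> S \<Longrightarrow> f x dvd f y \<Longrightarrow> x = y"
    and "\<And>x. x \<in> S \<Longrightarrow> f x ^ n dvd a"
  shows "(\<Prod>x\<in>S. f x ^ n) dvd a"
  using assms
proof (induction S rule: finite_induct)
  case (insert x S)
  note prime = insert.prems(1) and distinct = insert.prems(2) and dvd = insert.prems(3)
  let ?P = "\<Prod>y\<in>S. f y ^ n"
  have px: "prime_elem (f x)" using prime by simp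
  have "?P dvd a"
  proof (rule insert.IH)
    show "prime_elem (f y)" if "y \<in> S" for y using prime that by simp
    show "y = z" if "y \<in> S" "z \<in> S" "f y dvd f z" for y z by (rule distinct) (use that in simp_all)
    show "f y ^ n dvd a" if "y \<in> S" for y using dvd that by simp
  qed
  then obtain b where a: "a = ?P * b" by (rule dvdE)
  have "\<not> f x dvd ?P"
  proof
    assume "f x dvd ?P"
    then obtain y where y: "y \<in> S" "f x dvd f y ^ n"
      using prime_elem_dvd_prodD[OF px insert.hyps(1)] by blast
    then have "f x dvd f y" using px prime_elem_dvd_power by blast
    then have "x = y" using distinct[of x y] y(1) by simp
    then show False using insert.hyps(2) y(1) by simp
  qed
  moreover have "f x ^ n dvd ?P * b" using dvd[of x] a by simp
  ultimately have "f x ^ n dvd b" by (rule prime_elem_power_dvd_mult_cancel[OF px])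
  then show ?case by (simp add: insert.hyps a mult_dvd_mono mult.commute)
qed simp

section \<open>The linear forms x_c - x_d are prime\<close>

definition subst_monom :: "nat \<Rightarrow> nat \<Rightarrow> (nat \<Rightarrow>\<^sub>0 nat) \<Rightarrow> (nat \<Rightarrow>\<^sub>0 nat)" where
  "subst_monom c d m =
     Poly_Mapping.update c 0 m + Poly_Mapping.single d (Poly_Mapping.lookup m c)"

text \<open>subst_mvar c d P is P with x_c replaced by x_d.\<close>

definition subst_mvar :: "nat \<Rightarrow> nat \<Rightarrow> 'a::comm_ring_1 mpoly \<Rightarrow> 'a mpoly" where
  "subst_mvar c d P =
     (\<Sum>m\<in>Poly_Mapping.keys P. Poly_Mapping.single (subst_monom c d m) (Poly_Mapping.lookup P m))"

lemma subst_monom_add: "subst_monom c d (m + n) = subst_monom c d m + subst_monom c d n"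
  by (rule poly_mapping_eqI) (simp add: subst_monom_def lookup_add lookup_update lookup_single when_def)

lemma subst_monom_0: "subst_monom c d 0 = 0"
  by (rule poly_mapping_eqI) (simp add: subst_monom_def lookup_update)

lemma subst_mvar_eq_sum:
  assumes "finite S" "Poly_Mapping.keys P \<subseteq> S"
  shows "subst_mvar c d P =
           (\<Sum>m\<in>S. Poly_Mapping.single (subst_monom c d m) (Poly_Mapping.lookup P m))"
  unfolding subst_mvar_def
  by (rule sum.mono_neutral_left) (use assms in \<open>auto simp: in_keys_iff\<close>)

lemma subst_mvar_single:
  "subst_mvar c d (Poly_Mapping.single m a) = Poly_Mapping.single (subst_monom c d m) a"
  by (cases "a = 0") (simp_all add: subst_mvar_def)

lemma mpoly_eq_sum_single:
  "P = (\<Sum>m\<in>Poly_Mapping.keys P. Poly_Mapping.single m (Poly_Mapping.lookup P m))"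
  by (rule poly_mapping_eqI) (simp add: lookup_sum lookup_single when_def in_keys_iff)

lemma subst_mvar_add: "subst_mvar c d (P + Q) = subst_mvar c d P + subst_mvar c d Q"
proof -
  let ?S = "Poly_Mapping.keys P \<union> Poly_Mapping.keys Q"
  have "subst_mvar c d (P + Q) =
          (\<Sum>m\<in>?S. Poly_Mapping.single (subst_monom c d m) (Poly_Mapping.lookup (P + Q) m))"
    by (rule subst_mvar_eq_sum) (auto dest: subsetD[OF keys_add])
  also have "\<dots> = subst_mvar c d P + subst_mvar c d Q"
    by (simp add: lookup_add single_add sum.distrib subst_mvar_eq_sum[of ?S])
  finally show ?thesis .
qed

interpretation subst_mvar: comm_monoid_add_hom "subst_mvar c d" for c d
  by unfold_locales (simp_all add: subst_mvar_add subst_mvar_def[where P = 0])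

lemma subst_mvar_mult: "subst_mvar c d (P * Q) = subst_mvar c d P * subst_mvar c d Q"
proof -
  let ?a = "Poly_Mapping.lookup P" and ?b = "Poly_Mapping.lookup Q"
  have "P * Q = (\<Sum>m\<in>Poly_Mapping.keys P. \<Sum>n\<in>Poly_Mapping.keys Q.
                  Poly_Mapping.single (m + n) (?a m * ?b n))"
    by (subst mpoly_eq_sum_single, subst (2) mpoly_eq_sum_single) (simp add: sum_product mult_single)
  then have "subst_mvar c d (P * Q) = (\<Sum>m\<in>Poly_Mapping.keys P. \<Sum>n\<in>Poly_Mapping.keys Q.
      Poly_Mapping.single (subst_monom c d m) (?a m) * Poly_Mapping.single (subst_monom c d n) (?b n))"
    by (simp add: subst_mvar.hom_sum subst_mvar_single subst_monom_add mult_single)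
  also have "\<dots> = subst_mvar c d P * subst_mvar c d Q"
    by (simp add: subst_mvar_def sum_product)
  finally show ?thesis .
qed

interpretation subst_mvar: comm_ring_hom "subst_mvar c d" for c d
  by unfold_locales
    (simp_all add: subst_mvar_add subst_mvar_mult subst_mvar_single subst_monom_0 flip: single_one)

lemma subst_mvar_mvar: "subst_mvar c d (mvar i) = mvar (if i = c then d else i)"
proof -
  have "subst_monom c d (Poly_Mapping.single i 1) = Poly_Mapping.single (if i = c then d else i) 1"
    by (rule poly_mapping_eqI) (auto simp: subst_monom_def lookup_add lookup_update lookup_single when_def)
  then show ?thesis by (simp add: mvar_def subst_mvar_single)
qed

lemma mvar_power: "mvar c ^ a = Poly_Mapping.single (Poly_Mapping.single c a) 1"
  by (induction a) (simp_all add: mvar_def mult_single single_add[symmetric])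

lemma mvar_eq_iff: "mvar c = (mvar d :: 'a::comm_ring_1 mpoly) \<longleftrightarrow> c = d"
proof
  assume eq: "mvar c = (mvar d :: 'a mpoly)"
  have "(1::'a) = Poly_Mapping.lookup (mvar c) (Poly_Mapping.single c 1)"
    by (simp add: mvar_def)
  also have "\<dots> = Poly_Mapping.lookup (mvar d) (Poly_Mapping.single c 1)"
    by (simp add: eq)
  finally have "Poly_Mapping.single d (1::nat) = Poly_Mapping.single c 1"
    by (auto simp: mvar_def lookup_single when_def split: if_splits)
  then have "Poly_Mapping.lookup (Poly_Mapping.single d (1::nat)) c = 1" by simp
  then show "c = d" by (simp add: lookup_single when_def split: if_splits)
qed simp

lemma mvar_diff_dvd_single_diff:
  "mvar c - mvar d dvd Poly_Mapping.single m a - Poly_Mapping.single (subst_monom c d m) a"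
proof -
  define k where "k = Poly_Mapping.lookup m c"
  define m' where "m' = Poly_Mapping.update c 0 m"
  have "m = m' + Poly_Mapping.single c k"
    by (rule poly_mapping_eqI) (simp add: m'_def k_def lookup_add lookup_update lookup_single when_def)
  then have "Poly_Mapping.single m a - Poly_Mapping.single (subst_monom c d m) a
               = Poly_Mapping.single m' a * (mvar c ^ k - mvar d ^ k)"
    by (simp add: subst_monom_def m'_def k_def mvar_power mult_single right_diff_distrib)
  also have "mvar c - mvar d dvd \<dots>"
    by (intro dvd_mult) (simp add: power_diff_sumr2)
  finally show ?thesis .
qed

lemma mvar_diff_dvd_iff: "mvar c - mvar d dvd P \<longleftrightarrow> subst_mvar c d P = 0"
proof
  assume "mvar c - mvar d dvd P"
  then show "subst_mvar c d P = 0"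
    by (auto simp: subst_mvar.hom_mult subst_mvar.hom_minus subst_mvar_mvar)
next
  assume "subst_mvar c d P = 0"
  then have "P = (\<Sum>m\<in>Poly_Mapping.keys P. Poly_Mapping.single m (Poly_Mapping.lookup P m)
                  - Poly_Mapping.single (subst_monom c d m) (Poly_Mapping.lookup P m))"
    by (subst (1) mpoly_eq_sum_single) (simp add: subst_mvar_def sum_subtractf)
  also have "mvar c - mvar d dvd \<dots>"
    by (intro dvd_sum mvar_diff_dvd_single_diff)
  finally show "mvar c - mvar d dvd P" .
qed

lemma prime_elem_mvar_diff:
  assumes "c \<noteq> d"
  shows "prime_elem (mvar c - mvar d :: 'a::idom mpoly)"
proof (rule prime_elemI)
  show "mvar c - mvar d \<noteq> (0 :: 'a mpoly)" using assms by (simp add: mvar_eq_iff)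
  show "\<not> mvar c - mvar d dvd (1 :: 'a mpoly)"
    by (simp add: mvar_diff_dvd_iff)
  fix a b :: "'a mpoly"
  show "mvar c - mvar d dvd a * b \<Longrightarrow> mvar c - mvar d dvd a \<or> mvar c - mvar d dvd b"
    by (simp add: mvar_diff_dvd_iff subst_mvar.hom_mult)
qed

lemma mvar_diff_dvd_mvar_diff_imp_eq:
  assumes "i < j" "k < l" and "mvar i - mvar j dvd (mvar k - mvar l :: 'a::comm_ring_1 mpoly)"
  shows "(i, j) = (k, l)"
proof -
  have "mvar (if k = i then j else k) = (mvar (if l = i then j else l) :: 'a mpoly)"
    using assms(3) by (simp add: mvar_diff_dvd_iff subst_mvar.hom_minus subst_mvar_mvar)
  then show ?thesis using assms(1,2) by (auto simp: mvar_eq_iff split: if_splits)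
qed

lemma delta_power_dvd:
  fixes P :: "'a::idom mpoly"
  assumes "\<And>i j. 1 \<le> i \<Longrightarrow> i < j \<Longrightarrow> j \<le> r \<Longrightarrow> (mvar i - mvar j) ^ n dvd P"
  shows "delta r ^ n dvd P"
proof -
  let ?S = "{(i, j). 1 \<le> i \<and> i < j \<and> j \<le> r}"
  have "finite ?S" by (rule finite_subset[of _ "{1..r} \<times> {1..r}"]) auto
  have "delta r ^ n = (\<Prod>x\<in>?S. (mvar (fst x) - mvar (snd x)) ^ n :: 'a mpoly)"
    unfolding delta_def prod_power_distrib by (intro prod.cong) auto
  also have "\<dots> dvd P"
  proof (rule prod_prime_elem_powers_dvd[OF \<open>finite ?S\<close>])
    fix x assume "x \<in> ?S"
    then show "prime_elem (mvar (fst x) - mvar (snd x) :: 'a mpoly)"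
      by (intro prime_elem_mvar_diff) auto
    show "(mvar (fst x) - mvar (snd x)) ^ n dvd P" using \<open>x \<in> ?S\<close> by (intro assms) auto
  next
    fix x y assume "x \<in> ?S" "y \<in> ?S"
      and "mvar (fst x) - mvar (snd x) dvd (mvar (fst y) - mvar (snd y) :: 'a mpoly)"
    then have "(fst x, snd x) = (fst y, snd y)" by (intro mvar_diff_dvd_mvar_diff_imp_eq) auto
    then show "x = y" by (simp add: prod_eq_iff)
  qed
  finally show ?thesis .
qed

lemma degree_fpoly_power: "degree (fpoly r ^ e :: 'a::comm_ring_1 mpoly poly) \<le> r * e"
proof -
  have "degree (fpoly r :: 'a mpoly poly) \<le> r"
    using degree_prod_sum_le[of "{1..r}" "\<lambda>l. [:- mvar l :: 'a mpoly, 1:]"] by (simp add: fpoly_def)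
  then show ?thesis by (rule order.trans[OF degree_power_le mult_le_mono1])
qed

lemma fpoly_power_pcompose:
  assumes "1 \<le> i" "i < j" "j \<le> r"
  obtains R where "fpoly r ^ e \<circ>\<^sub>p [:mvar j, 1:]
    = monom 1 e * ([:- (mvar i - mvar j), 1:] ^ e * R :: 'a::comm_ring_1 mpoly poly)"
proof
  let ?x = "\<lambda>l. [:mvar j - mvar l, 1:] :: 'a mpoly poly"
  have "fpoly r \<circ>\<^sub>p [:mvar j, 1:] = (\<Prod>l\<in>{1..r}. ?x l)"
    by (simp add: fpoly_def pcompose_hom.hom_prod pcompose_pCons)
  also have "{1..r} = insert j (insert i ({1..r} - {i, j}))" using assms by auto
  also have "(\<Prod>l\<in>insert j (insert i ({1..r} - {i, j})). ?x l)
      = ?x j * (?x i * (\<Prod>l\<in>{1..r} - {i, j}. ?x l))"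
    using assms by simp
  finally have "fpoly r \<circ>\<^sub>p [:mvar j, 1:]
      = [:0, 1:] * ([:- (mvar i - mvar j), 1:] * (\<Prod>l\<in>{1..r} - {i, j}. ?x l))"
    by simp
  then show "fpoly r ^ e \<circ>\<^sub>p [:mvar j, 1:]
    = monom 1 e * ([:- (mvar i - mvar j), 1:] ^ e * (\<Prod>l\<in>{1..r} - {i, j}. ?x l) ^ e)"
    by (simp only: pcompose_hom.hom_power power_mult_distrib monom_altdef smult_1_left)
qed

theorem lemma2:
  fixes r e d :: nat
  assumes "(r, e, d) \<in> DD CARD('p::prime_card)"
  shows "(delta r :: 'p mod_ring mpoly) ^ (2 * e - (CARD('p) - 1))
           dvd det (Mmat CARD('p) d (fpoly r ^ e))"
proof (rule delta_power_dvd)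
  let ?p = "CARD('p)"
  have p: "prime ?p" by (rule prime_card)
  have char: "of_nat ?p = (0 :: 'p mod_ring mpoly)"
    by (metis single_of_nat of_nat_card_eq_0 single_zero)
  have "0 < d" and re: "r * e \<le> (d + 1) * (?p - 1)" using assms by (auto simp: DD_def)
  have deg: "degree (fpoly r ^ e :: 'p mod_ring mpoly poly) \<le> (d + 1) * (?p - 1)"
    using degree_fpoly_power re by (rule order.trans)
  fix i j assume "1 \<le> i" "i < j" "j \<le> r"
  then obtain R where shift: "fpoly r ^ e \<circ>\<^sub>p [:mvar j, 1:]
      = monom 1 e * ([:- (mvar i - mvar j), 1:] ^ e * R :: 'p mod_ring mpoly poly)"
    by (rule fpoly_power_pcompose)
  show "(mvar i - mvar j :: 'p mod_ring mpoly) ^ (2 * e - (?p - 1)) dvd det (Mmat ?p d (fpoly r ^ e))"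
    by (rule power_dvd_det_Mmat[OF p char \<open>0 < d\<close> deg shift])
qed

end
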